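(* If an upper-embeddable cubic graph $G$ contains a loop, then $G$ is tightly two-face-embeddable.
   Context: Graphs are finite; loops and multiple edges are allowed; a cubic graph is $3$-regular. For a connected graph $H$, $\beta(H)=|E(H)|-|V(H)|+1$. A connected graph is upper-embeddable if it has a cellular embedding (all faces open discs) into a closed orientable surface with at most two faces; a cubic upper-embeddable graph with $\beta$ odd is called two-face-embeddable (it has such an embedding with exactly two faces). In an upper-embeddable cubic graph $G$, a pair $\{x,y\}$ of distinct vertices is removable if $x$ and $y$ are joined by exactly one edge, this edge $xy$ is not a bridge, and $G-\{x,y\}$ is (connected and) upper-embeddable. $G$ is amply upper-embeddable if it is upper-embeddable and has a removable pair; it is tightly upper-embeddable if it is upper-embeddable but not amply upper-embeddable. A two-face-embeddable cubic graph is tightly two-face-embeddable if it is not amply upper-embeddable. *)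

theory Defs
  imports Main
begin

text \<open>Finite multigraphs (loops and multiple edges allowed) in dart (half-edge) form:
  V is the vertex set, D the dart set, \<alpha> a fixed-point-free involution on D whose
  orbits {d, \<alpha> d} are the edges, and h d the vertex at which dart d lies.\<close>

definition graph :: "'v set \<Rightarrow> 'd set \<Rightarrow> ('d \<Rightarrow> 'd) \<Rightarrow> ('d \<Rightarrow> 'v) \<Rightarrow> bool" where
  "graph V D \<alpha> h \<longleftrightarrow> finite V \<and> finite D \<and>
     (\<forall>d\<in>D. \<alpha> d \<in> D \<and> \<alpha> d \<noteq> d \<and> \<alpha> (\<alpha> d) = d \<and> h d \<in> V)"

definition degree :: "'d set \<Rightarrow> ('d \<Rightarrow> 'v) \<Rightarrow> 'v \<Rightarrow> nat" where
  "degree D h v = card {d\<in>D. h d = v}"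

definition cubic :: "'v set \<Rightarrow> 'd set \<Rightarrow> ('d \<Rightarrow> 'd) \<Rightarrow> ('d \<Rightarrow> 'v) \<Rightarrow> bool" where
  "cubic V D \<alpha> h \<longleftrightarrow> graph V D \<alpha> h \<and> (\<forall>v\<in>V. degree D h v = 3)"

definition has_loop :: "'d set \<Rightarrow> ('d \<Rightarrow> 'd) \<Rightarrow> ('d \<Rightarrow> 'v) \<Rightarrow> bool" where
  "has_loop D \<alpha> h \<longleftrightarrow> (\<exists>d\<in>D. h (\<alpha> d) = h d)"

definition adj :: "'d set \<Rightarrow> ('d \<Rightarrow> 'd) \<Rightarrow> ('d \<Rightarrow> 'v) \<Rightarrow> ('v \<times> 'v) set" where
  "adj D \<alpha> h = {(h d, h (\<alpha> d)) | d. d \<in> D}"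

definition connected_graph :: "'v set \<Rightarrow> 'd set \<Rightarrow> ('d \<Rightarrow> 'd) \<Rightarrow> ('d \<Rightarrow> 'v) \<Rightarrow> bool" where
  "connected_graph V D \<alpha> h \<longleftrightarrow> V \<noteq> {} \<and> (\<forall>u\<in>V. \<forall>w\<in>V. (u, w) \<in> (adj D \<alpha> h)\<^sup>*)"

text \<open>Cycle rank (Betti number) \<beta>(H) = |E(H)| - |V(H)| + 1; |E| = |D| / 2.\<close>
definition beta :: "'v set \<Rightarrow> 'd set \<Rightarrow> int" where
  "beta V D = int (card D div 2) - int (card V) + 1"

definition orb :: "('d \<Rightarrow> 'd) \<Rightarrow> 'd \<Rightarrow> 'd set" where
  "orb f d = {(f ^^ n) d | n. True}"

definition rotation_system :: "'d set \<Rightarrow> ('d \<Rightarrow> 'v) \<Rightarrow> ('d \<Rightarrow> 'd) \<Rightarrow> bool" where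
  "rotation_system D h \<sigma> \<longleftrightarrow> bij_betw \<sigma> D D \<and>
     (\<forall>d\<in>D. orb \<sigma> d = {d'\<in>D. h d' = h d})"

text \<open>Number of faces of the cellular orientable embedding determined by \<sigma>
  (Heffter-Edmonds face tracing): the orbits of \<sigma> \<circ> \<alpha> on the darts.
  A graph without edges (a single vertex in the connected case) has one face.\<close>
definition num_faces :: "'d set \<Rightarrow> ('d \<Rightarrow> 'd) \<Rightarrow> ('d \<Rightarrow> 'd) \<Rightarrow> nat" where
  "num_faces D \<alpha> \<sigma> = (if D = {} then 1 else card ((\<lambda>d. orb (\<sigma> \<circ> \<alpha>) d) ` D))"

definition upper_embeddable :: "'v set \<Rightarrow> 'd set \<Rightarrow> ('d \<Rightarrow> 'd) \<Rightarrow> ('d \<Rightarrow> 'v) \<Rightarrow> bool" where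
  "upper_embeddable V D \<alpha> h \<longleftrightarrow> graph V D \<alpha> h \<and> connected_graph V D \<alpha> h \<and>
     (\<exists>\<sigma>. rotation_system D h \<sigma> \<and> num_faces D \<alpha> \<sigma> \<le> 2)"

definition two_face_embeddable :: "'v set \<Rightarrow> 'd set \<Rightarrow> ('d \<Rightarrow> 'd) \<Rightarrow> ('d \<Rightarrow> 'v) \<Rightarrow> bool" where
  "two_face_embeddable V D \<alpha> h \<longleftrightarrow> cubic V D \<alpha> h \<and> upper_embeddable V D \<alpha> h \<and> odd (beta V D)"

definition del_darts :: "'d set \<Rightarrow> ('d \<Rightarrow> 'd) \<Rightarrow> ('d \<Rightarrow> 'v) \<Rightarrow> 'v set \<Rightarrow> 'd set" where
  "del_darts D \<alpha> h S = {d\<in>D. h d \<notin> S \<and> h (\<alpha> d) \<notin> S}"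

definition is_bridge :: "'d set \<Rightarrow> ('d \<Rightarrow> 'd) \<Rightarrow> ('d \<Rightarrow> 'v) \<Rightarrow> 'd \<Rightarrow> bool" where
  "is_bridge D \<alpha> h d \<longleftrightarrow> (h d, h (\<alpha> d)) \<notin> (adj (D - {d, \<alpha> d}) \<alpha> h)\<^sup>*"

definition removable :: "'v set \<Rightarrow> 'd set \<Rightarrow> ('d \<Rightarrow> 'd) \<Rightarrow> ('d \<Rightarrow> 'v) \<Rightarrow> 'v \<Rightarrow> 'v \<Rightarrow> bool" where
  "removable V D \<alpha> h x y \<longleftrightarrow> x \<in> V \<and> y \<in> V \<and> x \<noteq> y \<and>
     (\<exists>d\<in>D. {e\<in>D. h e = x \<and> h (\<alpha> e) = y} = {d} \<and> \<not> is_bridge D \<alpha> h d) \<and>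
     upper_embeddable (V - {x, y}) (del_darts D \<alpha> h {x, y}) \<alpha> h"

definition amply_upper_embeddable :: "'v set \<Rightarrow> 'd set \<Rightarrow> ('d \<Rightarrow> 'd) \<Rightarrow> ('d \<Rightarrow> 'v) \<Rightarrow> bool" where
  "amply_upper_embeddable V D \<alpha> h \<longleftrightarrow> upper_embeddable V D \<alpha> h \<and> (\<exists>x y. removable V D \<alpha> h x y)"

definition tightly_two_face_embeddable :: "'v set \<Rightarrow> 'd set \<Rightarrow> ('d \<Rightarrow> 'd) \<Rightarrow> ('d \<Rightarrow> 'v) \<Rightarrow> bool" where
  "tightly_two_face_embeddable V D \<alpha> h \<longleftrightarrow>
     two_face_embeddable V D \<alpha> h \<and> \<not> amply_upper_embeddable V D \<alpha> h"

end

(* The sign of a permutation of n points with c cycles is (-1)^(n - c). The face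
   permutation \<sigma> \<circ> \<alpha> of a rotation system is the product of the rotation \<sigma>, whose
   cycles are the vertices, and the edge involution \<alpha>, whose cycles are the edges;
   comparing signs on the 2|E| darts shows that the number of faces has the parity of
   |V| - |E| = 1 - \<beta>. A loop at a vertex of degree at most three yields a face of length
   one in every rotation system, so an upper-embeddable cubic graph with a loop has exactly
   two faces and \<beta> odd. If {x, y} were removable, neither x nor y could carry a loop (it
   would make the edge xy a bridge), so the loop survives in G - {x, y}, which is
   upper-embeddable and hence also has odd \<beta>; but deleting x and y removes two vertices
   and five edges, so \<beta> drops by 3. *)

theory Submission
  imports Defs "HOL-Combinatorics.Orbits"
begin

lemma permutation_orbit_eq:
  "permutation p \<Longrightarrow> y \<in> orbit p x \<Longrightarrow> orbit p y = orbit p x"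
  by (metis cyclic_on_orbit' orbit_cyclic_eq3)

lemma orbit_transpose_comp:
  assumes inj: "inj p" and x: "x \<noteq> e"
  shows "orbit (Transposition.transpose e (p e) \<circ> p) x = orbit p x - {e}"
proof -
  define q where "q = Transposition.transpose e (p e) \<circ> p"
  have q: "q y = (if p y = e then p e else p y)" if "y \<noteq> e" for y
    using that inj by (auto simp: q_def transpose_def dest: injD)
  have q_in: "q y \<in> orbit p x - {e}" if "y \<noteq> e" "p y \<in> orbit p x" for y
  proof (cases "p y = e")
    case True
    then have "p e \<noteq> e" using \<open>y \<noteq> e\<close> inj by (metis injD)
    then show ?thesis
      using True q[OF \<open>y \<noteq> e\<close>] orbit.step[OF \<open>p y \<in> orbit p x\<close>] by simp
  next
    case False
    then show ?thesis using q[OF \<open>y \<noteq> e\<close>] \<open>p y \<in> orbit p x\<close> by simp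
  qed
  have "orbit q x \<subseteq> orbit p x - {e}"
  proof
    fix y assume "y \<in> orbit q x"
    then show "y \<in> orbit p x - {e}"
    proof induction
      case base
      show ?case using q_in[OF x orbit.base] .
    next
      case (step y)
      then show ?case using q_in[of y] orbit.step[of y p x] by blast
    qed
  qed
  moreover
  \<comment> \<open>Along the p-orbit, q jumps from the predecessor of e directly to p e.\<close>
  have "if y = e then p e = e \<or> p e \<in> orbit q x else y \<in> orbit q x"
    if "y \<in> orbit p x" for y
    using that
  proof induction
    case base
    show ?case using q[OF x] orbit.base[of q x] by (auto split: if_splits)
  next
    case (step y)
    show ?case
    proof (cases "y = e")
      case True
      then show ?thesis using step.IH by auto
    next
      case False
      then have "y \<in> orbit q x" using step.IH by simp
      then have "q y \<in> orbit q x" by (rule orbit.step)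
      then show ?thesis using q[OF False] by (auto split: if_splits)
    qed
  qed
  then have "orbit p x - {e} \<subseteq> orbit q x"
    by (metis DiffE singletonI subsetI)
  ultimately show ?thesis
    unfolding q_def by blast
qed

lemma card_orbits_transpose_comp:
  assumes fin: "finite F" and e: "e \<notin> F" and p: "p permutes insert e F"
  shows "card (orbit p ` insert e F)
    = card (orbit (Transposition.transpose e (p e) \<circ> p) ` F) + (if p e = e then 1 else 0)"
proof -
  define q where "q = Transposition.transpose e (p e) \<circ> p"
  have perm: "permutation p"
    using fin p by (auto simp: permutation_permutes)
  have orbit_q: "orbit q x = orbit p x - {e}" if "x \<in> F" for x
    unfolding q_def using permutes_inj[OF p] that e by (intro orbit_transpose_comp) auto
  have self_in: "x \<in> orbit p x" for x
    using perm by (rule permutation_self_in_orbit)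
  show ?thesis
  proof (cases "p e = e")
    case True
    have "e \<notin> orbit p x" if "x \<in> F" for x
      using permutation_orbit_eq[OF perm, of e x] orbit_eq_singleton_iff[of p e] True self_in[of x]
        that e by auto
    then have "orbit q ` F = orbit p ` F"
      using orbit_q by (auto intro!: image_cong)
    moreover have "orbit p ` insert e F = insert {e} (orbit p ` F)"
      using True orbit_eq_singleton_iff[of p e] by simp
    moreover have "{e} \<notin> orbit p ` F"
      by (metis imageE e self_in singletonD)
    ultimately show ?thesis
      unfolding q_def[symmetric] using True fin by simp
  next
    case False
    then have "p e \<in> F"
      using permutes_in_image[OF p, of e] by simp
    then have "orbit p ` insert e F = orbit p ` F"
      using permutation_orbit_step[OF perm, of e] by auto
    moreover have "inj_on (\<lambda>X. X - {e}) (orbit p ` F)"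
    proof (rule inj_onI)
      fix X Y assume "X \<in> orbit p ` F" "Y \<in> orbit p ` F" "X - {e} = Y - {e}"
      then obtain x y where "x \<in> F" "y \<in> F" "X = orbit p x" "Y = orbit p y" "x \<in> Y"
        using self_in e by blast
      then show "X = Y" using permutation_orbit_eq[OF perm] by auto
    qed
    moreover have "orbit q ` F = (\<lambda>X. X - {e}) ` orbit p ` F"
      using orbit_q by (auto simp: image_image intro!: image_cong)
    ultimately show ?thesis
      unfolding q_def[symmetric] using False by (simp add: card_image)
  qed
qed

lemma evenperm_iff_card_orbits:
  assumes "finite S" "p permutes S"
  shows "evenperm p \<longleftrightarrow> even (card S - card (orbit p ` S))"
  using assms
proof (induction S arbitrary: p rule: finite_induct)
  case empty
  then show ?case by simp
next
  case (insert e F)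
  \<comment> \<open>q cuts e out of its cycle: the sign flips iff p e \<noteq> e, and a cycle is lost iff p e = e.\<close>
  define q where "q = Transposition.transpose e (p e) \<circ> p"
  have "p e \<in> insert e F"
    using permutes_in_image[OF insert.prems, of e] by simp
  then have "q permutes insert e F"
    unfolding q_def using insert.prems by (intro permutes_compose permutes_swap_id) auto
  then have "q permutes F"
    by (rule permutes_superset) (auto simp: q_def)
  then have "evenperm q \<longleftrightarrow> even (card F - card (orbit q ` F))"
    by (rule insert.IH)
  moreover have "permutation p"
    using insert.hyps(1) insert.prems by (auto simp: permutation_permutes)
  then have "evenperm q \<longleftrightarrow> (e = p e) = evenperm p"
    unfolding q_def by (simp add: evenperm_comp[OF permutation_swap_id] evenperm_swap)
  moreover have "card (orbit q ` F) \<le> card F"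
    using insert.hyps(1) by (rule card_image_le)
  ultimately show ?case
    using card_orbits_transpose_comp[OF insert.hyps insert.prems] insert.hyps
    unfolding q_def[symmetric] by auto
qed

lemma sum_card_orbits:
  assumes "finite S" "p permutes S"
  shows "(\<Sum>X\<in>orbit p ` S. card X) = card S"
proof -
  have perm: "permutation p"
    using assms by (auto simp: permutation_permutes)
  have "\<Union>(orbit p ` S) = S"
    using permutes_orbit_subset[OF assms(2)] permutation_self_in_orbit[OF perm] by blast
  moreover have "pairwise disjnt (orbit p ` S)"
    by (auto simp: pairwise_def disjnt_def dest: permutation_orbit_eq[OF perm])
  moreover have "finite X" if "X \<in> orbit p ` S" for X
    using that permutes_orbit_subset[OF assms(2)] finite_subset assms(1) by blast
  ultimately show ?thesis
    using card_Union_disjoint[of "orbit p ` S"] by simp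
qed

lemma card_eq_twice_card_orbits_involution:
  assumes "finite S" "a permutes S" and "\<And>x. x \<in> S \<Longrightarrow> a x \<noteq> x \<and> a (a x) = x"
  shows "card S = 2 * card (orbit a ` S)"
proof -
  have "orbit a x = {x, a x}" if "x \<in> S" for x
  proof -
    have "(a ^^ 2) x = x" using assms(3)[OF that] by (simp add: numeral_2_eq_2)
    then have "orbit a x = {(a ^^ m) x | m. m < 2}" by (rule orbit_altdef_bounded) simp
    also have "\<dots> = {x, a x}"
      by (auto simp: less_2_cases_iff intro: exI[of _ 0] exI[of _ "Suc 0"])
    finally show ?thesis .
  qed
  then have "card X = 2" if "X \<in> orbit a ` S" for X
    using that assms(3) by (metis (no_types, lifting) card_2_iff imageE)
  then show ?thesis
    using sum_card_orbits[OF assms(1,2)] by simp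
qed

lemma permutes_perm_restrict:
  "bij_betw f A A \<Longrightarrow> perm_restrict f A permutes A"
  by (rule bij_imp_permutes) (auto simp: perm_restrict_def bij_betw_def inj_on_def)

lemma perm_restrict_comp:
  "g ` A \<subseteq> A \<Longrightarrow> perm_restrict f A \<circ> perm_restrict g A = perm_restrict (f \<circ> g) A"
  by (auto simp: perm_restrict_def fun_eq_iff)

lemma orb_eq_orbit_perm_restrict:
  assumes "finite A" "bij_betw f A A" "x \<in> A"
  shows "orb f x = orbit (perm_restrict f A) x"
proof -
  have "permutation (perm_restrict f A)"
    using assms(1) permutes_perm_restrict[OF assms(2)] by (auto simp: permutation_permutes)
  moreover have "(perm_restrict f A ^^ n) x = (f ^^ n) x \<and> (f ^^ n) x \<in> A" for n
    using assms(2,3) by (induction n) (auto simp: perm_restrict_def bij_betw_def)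
  ultimately show ?thesis
    unfolding orb_def by (simp add: orbit_altdef_permutation)
qed

lemma graphD:
  assumes "graph V D \<alpha> h" "d \<in> D"
  shows "\<alpha> d \<in> D" "\<alpha> d \<noteq> d" "\<alpha> (\<alpha> d) = d" "h d \<in> V"
  using assms unfolding graph_def by auto

lemma graph_finite:
  assumes "graph V D \<alpha> h"
  shows "finite V" "finite D"
  using assms unfolding graph_def by auto

lemma graph_bij_betw_alpha: "graph V D \<alpha> h \<Longrightarrow> bij_betw \<alpha> D D"
  by (rule bij_betw_byWitness[where f' = \<alpha>]) (auto simp: graphD)

lemma orbit_rotation_system:
  assumes "finite D" "rotation_system D h \<sigma>" "d \<in> D"
  shows "orbit (perm_restrict \<sigma> D) d = {d'\<in>D. h d' = h d}"
  using assms orb_eq_orbit_perm_restrict unfolding rotation_system_def by metis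

lemma num_faces_eq_card_orbits:
  assumes "graph V D \<alpha> h" "rotation_system D h \<sigma>" "D \<noteq> {}"
  shows "num_faces D \<alpha> \<sigma> = card (orbit (perm_restrict \<sigma> D \<circ> perm_restrict \<alpha> D) ` D)"
proof -
  have "bij_betw (\<sigma> \<circ> \<alpha>) D D"
    using assms(2) graph_bij_betw_alpha[OF assms(1)]
    unfolding rotation_system_def by (blast intro: bij_betw_trans)
  moreover have "perm_restrict \<sigma> D \<circ> perm_restrict \<alpha> D = perm_restrict (\<sigma> \<circ> \<alpha>) D"
    using graphD(1)[OF assms(1)] by (intro perm_restrict_comp) blast
  ultimately have "orb (\<sigma> \<circ> \<alpha>) d = orbit (perm_restrict \<sigma> D \<circ> perm_restrict \<alpha> D) d"
    if "d \<in> D" for d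
    using orb_eq_orbit_perm_restrict[OF graph_finite(2)[OF assms(1)] _ that] by simp
  then show ?thesis
    unfolding num_faces_def using assms(3) by (simp cong: image_cong)
qed

lemma connected_graph_image_head:
  assumes "graph V D \<alpha> h" "connected_graph V D \<alpha> h" "d \<in> D"
  shows "h ` D = V"
proof
  show "h ` D \<subseteq> V" using graphD(4)[OF assms(1)] by blast
  show "V \<subseteq> h ` D"
  proof
    fix v assume "v \<in> V"
    then have "(v, h d) \<in> (adj D \<alpha> h)\<^sup>*"
      using assms(2) graphD(4)[OF assms(1,3)] unfolding connected_graph_def by blast
    then show "v \<in> h ` D"
      using assms(3) by (cases rule: converse_rtranclE) (auto simp: adj_def)
  qed
qed

lemma even_num_faces_iff_odd_beta:
  assumes g: "graph V D \<alpha> h" and c: "connected_graph V D \<alpha> h" and "D \<noteq> {}"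
    and r: "rotation_system D h \<sigma>"
  shows "even (num_faces D \<alpha> \<sigma>) \<longleftrightarrow> odd (beta V D)"
proof -
  define s where "s = perm_restrict \<sigma> D"
  define a where "a = perm_restrict \<alpha> D"
  have fin: "finite D" using graph_finite(2)[OF g] .
  have s: "s permutes D"
    unfolding s_def using r by (auto simp: rotation_system_def intro: permutes_perm_restrict)
  have a: "a permutes D"
    unfolding a_def using g by (intro permutes_perm_restrict graph_bij_betw_alpha)
  have faces: "num_faces D \<alpha> \<sigma> = card (orbit (s \<circ> a) ` D)"
    unfolding s_def a_def using num_faces_eq_card_orbits[OF g r \<open>D \<noteq> {}\<close>] .
  have "orbit s ` D = (\<lambda>v. {d'\<in>D. h d' = v}) ` h ` D"
    unfolding s_def using orbit_rotation_system[OF fin r] by (auto simp: image_image)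
  moreover have "inj_on (\<lambda>v. {d'\<in>D. h d' = v}) (h ` D)"
    by (rule inj_onI) blast
  moreover obtain d where "d \<in> D"
    using \<open>D \<noteq> {}\<close> by blast
  then have "h ` D = V"
    by (rule connected_graph_image_head[OF g c])
  ultimately have vertices: "card (orbit s ` D) = card V"
    by (simp add: card_image)
  have edges: "card D = 2 * card (orbit a ` D)"
    using fin a by (rule card_eq_twice_card_orbits_involution)
      (simp add: a_def perm_restrict_def graphD[OF g])
  have "evenperm (s \<circ> a) \<longleftrightarrow> evenperm s = evenperm a"
    using fin s a by (intro evenperm_comp) (auto simp: permutation_permutes)
  then have "even (card D - card (orbit (s \<circ> a) ` D)) \<longleftrightarrow>
      (even (card D - card (orbit s ` D)) \<longleftrightarrow> even (card D - card (orbit a ` D)))"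
    using evenperm_iff_card_orbits[OF fin] s a permutes_compose[OF a s] by simp
  moreover have "card (orbit (s \<circ> a) ` D) \<le> card D" "card (orbit s ` D) \<le> card D"
    using fin by (auto intro: card_image_le)
  moreover have "even f \<longleftrightarrow> odd (int (n div 2) - int v + 1)"
    if "even (n - f) \<longleftrightarrow> (even (n - v) \<longleftrightarrow> even (n - e))" "f \<le> n" "v \<le> n" "n = 2 * e"
    for n f v e :: nat
    using that by presburger
  ultimately show ?thesis
    unfolding beta_def faces vertices[symmetric] using edges by blast
qed

lemma rotation_system_step:
  assumes "finite D" "rotation_system D h \<sigma>" "e \<in> D"
    and "e' \<in> D" "h e' = h e" "e' \<noteq> e"
  shows "\<sigma> e \<in> {d\<in>D. h d = h e} - {e}"
proof -
  have orbit: "orbit (perm_restrict \<sigma> D) e = {d\<in>D. h d = h e}"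
    using orbit_rotation_system[OF assms(1-3)] .
  then have "\<sigma> e \<in> {d\<in>D. h d = h e}"
    using orbit.base[of "perm_restrict \<sigma> D" e] assms(3) by (simp add: perm_restrict_simps)
  moreover have "\<sigma> e \<noteq> e"
  proof
    assume "\<sigma> e = e"
    then have "{d\<in>D. h d = h e} = {e}"
      using orbit orbit_eq_singleton_iff[of "perm_restrict \<sigma> D" e] assms(3)
      by (simp add: perm_restrict_simps)
    then show False
      using assms(4-6) by blast
  qed
  ultimately show ?thesis by blast
qed

lemma face_permutation_fixpoint_at_loop:
  assumes g: "graph V D \<alpha> h" and r: "rotation_system D h \<sigma>"
    and d: "d \<in> D" "h (\<alpha> d) = h d" and deg: "degree D h (h d) \<le> 3"
  obtains f where "f \<in> D" "\<sigma> (\<alpha> f) = f"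
proof -
  let ?T = "{d'\<in>D. h d' = h d}"
  have ad: "\<alpha> d \<in> D" "\<alpha> d \<noteq> d" "\<alpha> (\<alpha> d) = d"
    using graphD[OF g d(1)] by auto
  have rot: "\<sigma> d \<in> ?T - {d}" "\<sigma> (\<alpha> d) \<in> ?T - {\<alpha> d}"
    using rotation_system_step[OF graph_finite(2)[OF g] r] d ad by auto
  \<comment> \<open>At most one further dart lies at h d, so \<sigma> sends one end of the loop to the other.\<close>
  show ?thesis
  proof (cases "\<sigma> (\<alpha> d) = d \<or> \<sigma> d = \<alpha> d")
    case True
    then show ?thesis
    proof
      assume "\<sigma> (\<alpha> d) = d"
      then show ?thesis by (rule that[OF d(1)])
    next
      assume "\<sigma> d = \<alpha> d"
      then show ?thesis using ad by (intro that[of "\<alpha> d"]) simp_all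
    qed
  next
    case False
    let ?R = "?T - {d, \<alpha> d}"
    have "card ?R = card ?T - 2"
      using d ad by (subst card_Diff_subset) auto
    then have "card ?R \<le> Suc 0"
      using deg unfolding degree_def by simp
    moreover have "finite ?R"
      using graph_finite(2)[OF g] by simp
    moreover have "\<sigma> d \<in> ?R" "\<sigma> (\<alpha> d) \<in> ?R"
      using rot False by auto
    ultimately have "\<sigma> d = \<sigma> (\<alpha> d)"
      by (metis card_le_Suc0_iff_eq)
    moreover have "inj_on \<sigma> D"
      using r by (simp add: rotation_system_def bij_betw_def)
    ultimately have "\<alpha> d = d"
      using d(1) ad(1) by (metis inj_onD)
    with ad(2) show ?thesis by contradiction
  qed
qed

lemma two_le_num_faces_if_face_permutation_fixpoint:
  assumes g: "graph V D \<alpha> h" and r: "rotation_system D h \<sigma>" and f: "f \<in> D" "\<sigma> (\<alpha> f) = f"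
  shows "2 \<le> num_faces D \<alpha> \<sigma>"
proof -
  define \<phi> where "\<phi> = perm_restrict \<sigma> D \<circ> perm_restrict \<alpha> D"
  have af: "\<alpha> f \<in> D" "\<alpha> f \<noteq> f"
    using graphD[OF g f(1)] by auto
  have "\<phi> permutes D"
    unfolding \<phi>_def using r graph_bij_betw_alpha[OF g]
    by (intro permutes_compose permutes_perm_restrict) (auto simp: rotation_system_def)
  then have "\<alpha> f \<in> orbit \<phi> (\<alpha> f)"
    using graph_finite(2)[OF g] by (intro permutation_self_in_orbit) (auto simp: permutation_permutes)
  moreover have "orbit \<phi> f = {f}"
    using f af by (simp add: orbit_eq_singleton_iff \<phi>_def perm_restrict_simps)
  ultimately have "orbit \<phi> f \<noteq> orbit \<phi> (\<alpha> f)"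
    using af(2) by auto
  then have "2 = card {orbit \<phi> f, orbit \<phi> (\<alpha> f)}"
    by simp
  also have "\<dots> \<le> card (orbit \<phi> ` D)"
    using f(1) af(1) graph_finite(2)[OF g] by (intro card_mono) blast+
  also have "\<dots> = num_faces D \<alpha> \<sigma>"
    using num_faces_eq_card_orbits[OF g r, symmetric] f(1) unfolding \<phi>_def by blast
  finally show ?thesis .
qed

lemma odd_beta_if_loop:
  assumes u: "upper_embeddable V D \<alpha> h" and d: "d \<in> D" "h (\<alpha> d) = h d"
    and deg: "degree D h (h d) \<le> 3"
  shows "odd (beta V D)"
proof -
  obtain \<sigma> where r: "rotation_system D h \<sigma>" and faces: "num_faces D \<alpha> \<sigma> \<le> 2"
    and g: "graph V D \<alpha> h" and c: "connected_graph V D \<alpha> h"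
    using u unfolding upper_embeddable_def by blast
  obtain f where "f \<in> D" "\<sigma> (\<alpha> f) = f"
    using face_permutation_fixpoint_at_loop[OF g r d deg] .
  then have "num_faces D \<alpha> \<sigma> = 2"
    using two_le_num_faces_if_face_permutation_fixpoint[OF g r] faces by fastforce
  then show ?thesis
    using even_num_faces_iff_odd_beta[OF g c _ r] d(1) by auto
qed

lemma sym_adj:
  assumes "\<And>e. e \<in> E \<Longrightarrow> \<alpha> e \<in> E \<and> \<alpha> (\<alpha> e) = e"
  shows "sym (adj E \<alpha> h)"
proof (rule symI)
  fix u w assume "(u, w) \<in> adj E \<alpha> h"
  then obtain e where "e \<in> E" "u = h e" "w = h (\<alpha> e)"
    unfolding adj_def by blast
  then have "\<alpha> e \<in> E" "(w, u) = (h (\<alpha> e), h (\<alpha> (\<alpha> e)))"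
    using assms[of e] by auto
  then show "(w, u) \<in> adj E \<alpha> h"
    unfolding adj_def by blast
qed

lemma is_bridge_alpha:
  assumes g: "graph V D \<alpha> h" and d: "d \<in> D"
  shows "is_bridge D \<alpha> h (\<alpha> d) \<longleftrightarrow> is_bridge D \<alpha> h d"
proof -
  let ?E = "D - {d, \<alpha> d}"
  have "\<alpha> e \<in> ?E \<and> \<alpha> (\<alpha> e) = e" if "e \<in> ?E" for e
  proof -
    have e: "e \<in> D" "e \<noteq> d" "e \<noteq> \<alpha> d"
      using that by auto
    then have "\<alpha> e \<noteq> d" "\<alpha> e \<noteq> \<alpha> d"
      using graphD(3)[OF g e(1)] graphD(3)[OF g d] by metis+
    then show ?thesis
      using graphD[OF g e(1)] by auto
  qed
  then have sym: "sym ((adj ?E \<alpha> h)\<^sup>*)"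
    by (intro sym_rtrancl sym_adj)
  have "is_bridge D \<alpha> h (\<alpha> d) \<longleftrightarrow> (h (\<alpha> d), h d) \<notin> (adj ?E \<alpha> h)\<^sup>*"
    unfolding is_bridge_def graphD(3)[OF g d] by (simp add: insert_commute)
  also have "\<dots> \<longleftrightarrow> (h d, h (\<alpha> d)) \<notin> (adj ?E \<alpha> h)\<^sup>*"
    using sym by (meson symD)
  finally show ?thesis
    unfolding is_bridge_def .
qed

lemma is_bridge_if_loop_at_end:
  assumes g: "graph V D \<alpha> h" and d: "d \<in> D" "h (\<alpha> d) \<noteq> h d"
    and l: "l \<in> D" "h l = h d" "h (\<alpha> l) = h d" and deg: "degree D h (h d) \<le> 3"
  shows "is_bridge D \<alpha> h d"
proof -
  let ?T = "{e\<in>D. h e = h d}"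
  have "{l, \<alpha> l, d} \<subseteq> ?T"
    using l d graphD[OF g l(1)] by auto
  moreover have "d \<noteq> l" "d \<noteq> \<alpha> l"
    using d(2) l graphD(3)[OF g l(1)] by auto
  then have "card {l, \<alpha> l, d} = 3"
    using graphD(2)[OF g l(1)] by auto
  ultimately have darts: "?T = {l, \<alpha> l, d}"
    using card_seteq[of ?T "{l, \<alpha> l, d}"] deg graph_finite(2)[OF g]
    unfolding degree_def by simp
  have "w = h d" if "(h d, w) \<in> (adj (D - {d, \<alpha> d}) \<alpha> h)\<^sup>*" for w
    using that
  proof induction
    case (step u w)
    then obtain e where "e \<in> D - {d, \<alpha> d}" "h e = h d" "w = h (\<alpha> e)"
      unfolding adj_def by blast
    then have "e = l \<or> e = \<alpha> l"
      using darts by blast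
    then show ?case
      using \<open>w = h (\<alpha> e)\<close> l graphD(3)[OF g l(1)] by auto
  qed simp
  then show ?thesis
    unfolding is_bridge_def using d(2) by blast
qed

lemma no_loop_at_ends_of_non_bridge:
  assumes g: "graph V D \<alpha> h" and d: "d \<in> D" "h (\<alpha> d) \<noteq> h d" "\<not> is_bridge D \<alpha> h d"
    and deg: "degree D h (h d) \<le> 3" "degree D h (h (\<alpha> d)) \<le> 3"
    and e: "e \<in> D" "h e \<in> {h d, h (\<alpha> d)}"
  shows "h (\<alpha> e) \<noteq> h e"
proof
  assume loop: "h (\<alpha> e) = h e"
  have ad: "\<alpha> d \<in> D" "\<alpha> (\<alpha> d) = d"
    using graphD[OF g d(1)] by auto
  show False
  proof (cases "h e = h d")
    case True
    have "is_bridge D \<alpha> h d"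
      by (rule is_bridge_if_loop_at_end[OF g d(1,2) e(1)]) (use True loop deg in simp_all)
    with d(3) show False by contradiction
  next
    case False
    then have "h e = h (\<alpha> d)"
      using e(2) by blast
    have "is_bridge D \<alpha> h (\<alpha> d)"
      by (rule is_bridge_if_loop_at_end[OF g ad(1) _ e(1)])
        (use \<open>h e = h (\<alpha> d)\<close> loop d deg ad in auto)
    with d(3) is_bridge_alpha[OF g d(1)] show False by blast
  qed
qed

lemma card_del_darts:
  assumes g: "graph V D \<alpha> h"
  shows "card (D - del_darts D \<alpha> h S) + card {d\<in>D. h d \<in> S \<and> h (\<alpha> d) \<in> S}
    = 2 * card {d\<in>D. h d \<in> S}"
proof -
  let ?A = "{d\<in>D. h d \<in> S}"
  have fin: "finite ?A"
    using graph_finite(2)[OF g] by simp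
  have image: "e \<in> \<alpha> ` ?A \<longleftrightarrow> e \<in> D \<and> h (\<alpha> e) \<in> S" for e
  proof
    assume "e \<in> \<alpha> ` ?A"
    then obtain a where "a \<in> D" "h a \<in> S" "e = \<alpha> a"
      by blast
    then show "e \<in> D \<and> h (\<alpha> e) \<in> S"
      using graphD[OF g \<open>a \<in> D\<close>] by simp
  next
    assume "e \<in> D \<and> h (\<alpha> e) \<in> S"
    then have "\<alpha> e \<in> ?A" "e = \<alpha> (\<alpha> e)"
      using graphD[OF g] by auto
    then show "e \<in> \<alpha> ` ?A"
      by blast
  qed
  have union: "D - del_darts D \<alpha> h S = ?A \<union> \<alpha> ` ?A"
    unfolding del_darts_def using image by blast
  have inter: "?A \<inter> \<alpha> ` ?A = {d\<in>D. h d \<in> S \<and> h (\<alpha> d) \<in> S}"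
    using image by blast
  have "card (\<alpha> ` ?A) = card ?A"
    using graph_bij_betw_alpha[OF g] by (intro card_image) (auto simp: bij_betw_def inj_on_subset)
  then show ?thesis
    unfolding union inter[symmetric]
    using card_Un_Int[OF fin finite_imageI[OF fin, of \<alpha>]] by simp
qed

lemma beta_del_adjacent_pair:
  assumes g: "graph V D \<alpha> h" and xy: "x \<in> V" "y \<in> V" "x \<noteq> y"
    and deg: "degree D h x = 3" "degree D h y = 3"
    and d: "{e\<in>D. h e = x \<and> h (\<alpha> e) = y} = {d}"
    and no_loop: "\<And>e. e \<in> D \<Longrightarrow> h e \<in> {x, y} \<Longrightarrow> h (\<alpha> e) \<noteq> h e"
  shows "beta (V - {x, y}) (del_darts D \<alpha> h {x, y}) = beta V D - 3"
proof -
  have dD: "d \<in> D" "h d = x" "h (\<alpha> d) = y"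
    using d by auto
  have "{e\<in>D. h e \<in> {x, y}} = {e\<in>D. h e = x} \<union> {e\<in>D. h e = y}"
    by auto
  then have incident: "card {e\<in>D. h e \<in> {x, y}} = 6"
    using deg xy(3) graph_finite(2)[OF g] unfolding degree_def
    by (simp add: card_Un_disjoint disjoint_iff)
  have "{e\<in>D. h e \<in> {x, y} \<and> h (\<alpha> e) \<in> {x, y}} = {d, \<alpha> d}"
  proof (intro equalityI subsetI)
    fix e assume e: "e \<in> {e\<in>D. h e \<in> {x, y} \<and> h (\<alpha> e) \<in> {x, y}}"
    then have "e \<in> D" "h e \<in> {x, y}" "h (\<alpha> e) \<in> {x, y}" "h (\<alpha> e) \<noteq> h e"
      using no_loop by auto
    then have "e \<in> {e\<in>D. h e = x \<and> h (\<alpha> e) = y} \<or> \<alpha> e \<in> {e\<in>D. h e = x \<and> h (\<alpha> e) = y}"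
      using graphD[OF g \<open>e \<in> D\<close>] by auto
    then show "e \<in> {d, \<alpha> d}"
      unfolding d using graphD(3)[OF g \<open>e \<in> D\<close>] by auto
  qed (use dD graphD[OF g dD(1)] in auto)
  moreover have "card {d, \<alpha> d} = 2"
    using graphD(2)[OF g dD(1)] by auto
  ultimately have "card (D - del_darts D \<alpha> h {x, y}) = 10"
    using card_del_darts[OF g, of "{x, y}"] incident by simp
  moreover have "del_darts D \<alpha> h {x, y} \<subseteq> D"
    unfolding del_darts_def by blast
  ultimately have "card D = card (del_darts D \<alpha> h {x, y}) + 10"
    using graph_finite(2)[OF g] finite_subset card_Diff_subset[of "del_darts D \<alpha> h {x, y}" D]
      card_mono[of D "del_darts D \<alpha> h {x, y}"] by fastforce
  moreover have "card V = card (V - {x, y}) + 2"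
    using xy graph_finite(1)[OF g] card_Diff_subset[of "{x, y}" V] card_mono[of V "{x, y}"]
    by auto
  ultimately show ?thesis
    unfolding beta_def by simp
qed

lemma not_removable_if_loop:
  assumes c: "cubic V D \<alpha> h" and l: "l \<in> D" "h (\<alpha> l) = h l" and odd: "odd (beta V D)"
  shows "\<not> removable V D \<alpha> h x y"
proof
  assume "removable V D \<alpha> h x y"
  then obtain d where xy: "x \<in> V" "y \<in> V" "x \<noteq> y"
    and d: "{e\<in>D. h e = x \<and> h (\<alpha> e) = y} = {d}" and not_bridge: "\<not> is_bridge D \<alpha> h d"
    and u: "upper_embeddable (V - {x, y}) (del_darts D \<alpha> h {x, y}) \<alpha> h"
    unfolding removable_def by blast
  have g: "graph V D \<alpha> h" and deg: "\<And>v. v \<in> V \<Longrightarrow> degree D h v = 3"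
    using c unfolding cubic_def by auto
  have dD: "d \<in> D" "h d = x" "h (\<alpha> d) = y"
    using d by auto
  have no_loop: "h (\<alpha> e) \<noteq> h e" if "e \<in> D" "h e \<in> {x, y}" for e
    using no_loop_at_ends_of_non_bridge[OF g dD(1) _ not_bridge _ _ that(1)] that(2) dD xy deg
    by auto
  have "l \<in> del_darts D \<alpha> h {x, y}"
    using l no_loop[OF l(1)] unfolding del_darts_def by auto
  moreover have "degree (del_darts D \<alpha> h {x, y}) h (h l) \<le> degree D h (h l)"
    unfolding degree_def del_darts_def using graph_finite(2)[OF g] by (intro card_mono) auto
  ultimately have "odd (beta (V - {x, y}) (del_darts D \<alpha> h {x, y}))"
    using odd_beta_if_loop[OF u _ l(2)] deg graphD(4)[OF g l(1)] by auto
  then show False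
    using beta_del_adjacent_pair[OF g xy deg[OF xy(1)] deg[OF xy(2)] d no_loop] odd by simp
qed

theorem lemma3:
  fixes V :: "'v set" and D :: "'d set" and \<alpha> :: "'d \<Rightarrow> 'd" and h :: "'d \<Rightarrow> 'v"
  assumes "cubic V D \<alpha> h"
    and "upper_embeddable V D \<alpha> h"
    and "has_loop D \<alpha> h"
  shows "tightly_two_face_embeddable V D \<alpha> h"
proof -
  obtain l where l: "l \<in> D" "h (\<alpha> l) = h l"
    using assms(3) unfolding has_loop_def by blast
  have "degree D h (h l) = 3"
    using assms(1) l(1) unfolding cubic_def graph_def by auto
  then have "odd (beta V D)"
    using odd_beta_if_loop[OF assms(2) l] by simp
  moreover have "\<not> removable V D \<alpha> h x y" for x y
    using not_removable_if_loop[OF assms(1) l \<open>odd (beta V D)\<close>] .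
  ultimately show ?thesis
    using assms(1,2)
    unfolding tightly_two_face_embeddable_def two_face_embeddable_def amply_upper_embeddable_def
    by blast
qed

end
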